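(* Let $N,\mu,\beta,\sigma,\gamma,p>0$ and $0<\rho<1$ and consider $$\begin{aligned}S'&=\mu N-\tfrac{\beta}{N}S(1-\rho)I-\tfrac{p}{N}S-\mu S, & E'&=\tfrac{\beta}{N}S(1-\rho)I-(\sigma+\mu) E, & I'&=\sigma E-(\gamma+\mu) I,\\ R'&=\gamma I-\mu R, & V'&=\tfrac{p}{N}S-\mu V.\end{aligned}$$ Let $\mathcal{R}_0=\dfrac{\mu N\sigma\beta(1-\rho)}{(\sigma+\mu)(\gamma+\mu)(p+\mu N)}$. If $\mathcal{R}_0>1$, then the endemic equilibrium $P^e=(S^e,E^e,I^e,R^e,V^e)$ given by $$S^e=\frac{(\sigma+\mu)(\gamma+\mu)N}{\sigma\beta(1-\rho)},\quad I^e=\frac{\mu N\sigma\beta(1-\rho)-(\sigma+\mu)(\gamma+\mu)(p+\mu N)}{(\sigma+\mu)(\gamma+\mu)\beta(1-\rho)},$$ $$E^e=\frac{\gamma+\mu}{\sigma}I^e,\quad R^e=\frac{\gamma}{\mu}I^e,\quad V^e=\frac{p}{\mu N}S^e$$ is asymptotically stable.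
   Context: SEIR model with vaccination at constant effective rate $p$ and equal birth/death rate $\mu$; $\mathcal{R}_0$ is the reproductive number, and $\mathcal{R}_0>1$ is equivalent to $I^e>0$. *)

theory Defs
  imports "HOL-Analysis.Analysis"
begin

type_synonym state5 = "real \<times> real \<times> real \<times> real \<times> real"

definition seirv_field ::
  "real \<Rightarrow> real \<Rightarrow> real \<Rightarrow> real \<Rightarrow> real \<Rightarrow> real \<Rightarrow> real \<Rightarrow> state5 \<Rightarrow> state5" where
  "seirv_field N \<mu> \<beta> \<sigma> \<gamma> p \<rho> =
     (\<lambda>(S, E, I, R, V).
        (\<mu> * N - \<beta> / N * S * (1 - \<rho>) * I - p / N * S - \<mu> * S,
         \<beta> / N * S * (1 - \<rho>) * I - (\<sigma> + \<mu>) * E,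
         \<sigma> * E - (\<gamma> + \<mu>) * I,
         \<gamma> * I - \<mu> * R,
         p / N * S - \<mu> * V))"

definition is_solution_on :: "('a::real_normed_vector \<Rightarrow> 'a) \<Rightarrow> (real \<Rightarrow> 'a) \<Rightarrow> real set \<Rightarrow> bool" where
  "is_solution_on f x T \<longleftrightarrow> (\<forall>t\<in>T. (x has_vector_derivative f (x t)) (at t within T))"

definition asymptotically_stable :: "('a::real_normed_vector \<Rightarrow> 'a) \<Rightarrow> 'a \<Rightarrow> bool" where
  "asymptotically_stable f xe \<longleftrightarrow>
     f xe = 0 \<and>
     (\<forall>\<epsilon>>0. \<exists>\<delta>>0. \<forall>x T. is_solution_on f x {0..T} \<and> dist (x 0) xe < \<delta> \<longrightarrow>
                       (\<forall>t\<in>{0..T}. dist (x t) xe < \<epsilon>)) \<and>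
     (\<exists>\<delta>>0. \<forall>x. is_solution_on f x {0..} \<and> dist (x 0) xe < \<delta> \<longrightarrow>
                 (x \<longlongrightarrow> xe) at_top)"

definition R0_seirv :: "real \<Rightarrow> real \<Rightarrow> real \<Rightarrow> real \<Rightarrow> real \<Rightarrow> real \<Rightarrow> real \<Rightarrow> real" where
  "R0_seirv N \<mu> \<beta> \<sigma> \<gamma> p \<rho> =
     \<mu> * N * \<sigma> * \<beta> * (1 - \<rho>) / ((\<sigma> + \<mu>) * (\<gamma> + \<mu>) * (p + \<mu> * N))"

end

theory Submission
  imports Defs
begin

text \<open>Write a state near the positive equilibrium as \<open>S = Se (1 + x)\<close>, \<open>E = Ee (1 + y)\<close>,
  \<open>I = Ie (1 + z)\<close>, \<open>R = Re (1 + u)\<close>, \<open>V = Ve (1 + w)\<close>. The equilibrium equations turn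
  the model into
    \<open>x' = -(q + b) x - q z - q x z\<close>, \<open>y' = m (x - y + z + x z)\<close>, \<open>z' = n (y - z)\<close>,
    \<open>u' = \<mu> (z - u)\<close>, \<open>w' = \<mu> (x - w)\<close>
  with \<open>q = \<beta> (1 - \<rho>) Ie / N\<close>, \<open>b = p / N + \<mu>\<close>, \<open>m = \<sigma> + \<mu>\<close>, \<open>n = \<gamma> + \<mu>\<close>.
  For \<open>\<epsilon> = m / (4 n + 2 (q + b))\<close> and \<open>\<eta> = \<epsilon> q / 8\<close> the quadratic form
  \<open>(m/q x\<^sup>2 + y\<^sup>2 + m/n z\<^sup>2) / 2 + \<epsilon> x z + (\<eta>/\<mu>) (u\<^sup>2 + w\<^sup>2)\<close> is positive definite,
  its derivative along the linear part is at most \<open>-\<eta>\<close> times the squared norm, and on a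
  small ball the quadratic terms spoil at most half of this. A Lyapunov function squeezed
  between two multiples of the squared distance, whose derivative is bounded by a negative
  multiple of itself, yields stability and attractivity. The hypothesis on \<open>R0_seirv\<close> is
  exactly what makes the explicit endemic point positive.\<close>

section \<open>Quadratic Lyapunov functions\<close>

lemma is_solution_on_subset:
  assumes "is_solution_on f x T" "S \<subseteq> T"
  shows "is_solution_on f x S"
  using assms has_vector_derivative_within_subset unfolding is_solution_on_def by blast

lemma is_solution_on_continuous_on:
  assumes "is_solution_on f x T"
  shows "continuous_on T x"
  using assms has_vector_derivative_continuous
  unfolding is_solution_on_def continuous_on_eq_continuous_within by blast

lemma decrease_from_derivative_bound:
  fixes g g' :: "real \<Rightarrow> real"
  assumes "a \<le> b" "continuous_on {a..b} g"
    and "\<And>t. a < t \<Longrightarrow> t < b \<Longrightarrow> (g has_real_derivative g' t) (at t)"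
    and "\<And>t. a < t \<Longrightarrow> t < b \<Longrightarrow> g' t \<le> - k"
  shows "g b \<le> g a - k * (b - a)"
proof -
  have "g b + k * b \<le> g a + k * a"
  proof (rule DERIV_nonpos_imp_decreasing_open[where f = "\<lambda>t. g t + k * t"])
    show "continuous_on {a..b} (\<lambda>t. g t + k * t)"
      using assms(2) by (intro continuous_intros)
    fix t assume "a < t" "t < b"
    then show "\<exists>y. ((\<lambda>t. g t + k * t) has_real_derivative y) (at t) \<and> y \<le> 0"
      using assms(3,4)[of t] by (intro exI[of _ "g' t + k"]) (auto intro!: derivative_eq_intros)
  qed fact
  then show ?thesis by (simp add: algebra_simps)
qed

locale quadratic_lyapunov =
  fixes f :: "'a::real_normed_vector \<Rightarrow> 'a" and xe :: 'a
    and \<Phi> :: "'a \<Rightarrow> real" and D\<Phi> :: "'a \<Rightarrow> 'a \<Rightarrow> real"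
    and A B r c :: real
  assumes has_derivative_\<Phi>: "\<And>y. (\<Phi> has_derivative D\<Phi> y) (at y)"
    and \<Phi>_lower: "\<And>y. A * (dist y xe)\<^sup>2 \<le> \<Phi> y"
    and \<Phi>_upper: "\<And>y. \<Phi> y \<le> B * (dist y xe)\<^sup>2"
    and A_pos: "A > 0" and B_pos: "B > 0" and r_pos: "r > 0" and c_pos: "c > 0"
    and \<Phi>_decay: "\<And>y. dist y xe < r \<Longrightarrow> D\<Phi> y (f y) \<le> - c * \<Phi> y"
begin

lemma \<Phi>_nonneg: "\<Phi> y \<ge> 0"
  using \<Phi>_lower[of y] A_pos by (smt (verit) zero_le_mult_iff zero_le_power2)

lemma \<Phi>_along_solution_has_derivative:
  assumes "is_solution_on f x {0..T}" "0 < t" "t < T"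
  shows "((\<lambda>t. \<Phi> (x t)) has_real_derivative D\<Phi> (x t) (f (x t))) (at t)"
proof -
  have "(x has_vector_derivative f (x t)) (at t within {0..T})"
    using assms unfolding is_solution_on_def by simp
  then have "(x has_derivative (\<lambda>h. h *\<^sub>R f (x t))) (at t)"
    using at_within_Icc_at[OF assms(2,3)] by (simp add: has_vector_derivative_def)
  from has_derivative_compose[OF this has_derivative_\<Phi>]
  have "((\<lambda>t. \<Phi> (x t)) has_derivative (\<lambda>h. D\<Phi> (x t) (h *\<^sub>R f (x t)))) (at t)" .
  moreover have "linear (D\<Phi> (x t))"
    using has_derivative_\<Phi> has_derivative_linear by blast
  then have "(\<lambda>h. D\<Phi> (x t) (h *\<^sub>R f (x t))) = (\<lambda>h. D\<Phi> (x t) (f (x t)) * h)"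
    by (simp add: linear_scale mult.commute)
  ultimately show ?thesis
    unfolding has_field_derivative_def by simp
qed

lemma \<Phi>_decrease_along_solution:
  assumes sol: "is_solution_on f x {0..T}" and st: "0 \<le> s" "s \<le> t" "t \<le> T"
    and near: "\<And>u. s < u \<Longrightarrow> u < t \<Longrightarrow> dist (x u) xe < r"
    and k: "\<And>u. s < u \<Longrightarrow> u < t \<Longrightarrow> k \<le> c * \<Phi> (x u)"
  shows "\<Phi> (x t) \<le> \<Phi> (x s) - k * (t - s)"
proof (rule decrease_from_derivative_bound[OF \<open>s \<le> t\<close>])
  have "continuous_on {s..t} x"
    using is_solution_on_continuous_on[OF sol] st by (auto elim: continuous_on_subset)
  moreover have "continuous_on UNIV \<Phi>"
    using has_derivative_\<Phi> by (intro has_derivative_continuous_on) auto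
  ultimately show "continuous_on {s..t} (\<lambda>t. \<Phi> (x t))"
    using continuous_on_compose2 by blast
  fix u assume "s < u" "u < t"
  then show "((\<lambda>t. \<Phi> (x t)) has_real_derivative D\<Phi> (x u) (f (x u))) (at u)"
    and "D\<Phi> (x u) (f (x u)) \<le> - k"
    using \<Phi>_along_solution_has_derivative[OF sol] \<Phi>_decay[OF near] k st by force+
qed

text \<open>The first exit time from the ball of radius \<open>\<rho>\<close> would have a larger value of \<open>\<Phi>\<close>
  than the initial point, although \<open>\<Phi>\<close> does not increase before it.\<close>
lemma solution_stays_in_ball:
  assumes sol: "is_solution_on f x {0..T}" and "0 < \<rho>" "\<rho> \<le> r"
    and start: "dist (x 0) xe < \<rho> * sqrt (A / B)" and "t \<in> {0..T}"
  shows "dist (x t) xe < \<rho>"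
proof (rule ccontr)
  define K where "K = {0..T} \<inter> (\<lambda>t. dist (x t) xe) -` {\<rho>..}"
  assume "\<not> dist (x t) xe < \<rho>"
  then have "K \<noteq> {}" using \<open>t \<in> {0..T}\<close> unfolding K_def by force
  have "continuous_on {0..T} (\<lambda>t. dist (x t) xe)"
    using is_solution_on_continuous_on[OF sol] by (intro continuous_intros)
  then have "closed K"
    unfolding K_def by (rule continuous_closed_preimage) auto
  moreover have "bdd_below K"
    unfolding K_def by (rule bdd_belowI[of _ 0]) auto
  ultimately have "Inf K \<in> K"
    using \<open>K \<noteq> {}\<close> closed_contains_Inf by blast
  define t1 where "t1 = Inf K"
  have t1: "0 \<le> t1" "t1 \<le> T" "\<rho> \<le> dist (x t1) xe"
    using \<open>Inf K \<in> K\<close> unfolding K_def t1_def by auto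
  have before_t1: "dist (x u) xe < \<rho>" if "0 \<le> u" "u < t1" for u
    using cInf_lower[OF _ \<open>bdd_below K\<close>, of u] that t1 unfolding K_def t1_def by force
  have "A * \<rho>\<^sup>2 \<le> A * (dist (x t1) xe)\<^sup>2"
    using t1(3) \<open>0 < \<rho>\<close> A_pos by (intro mult_left_mono power_mono) auto
  also have "\<dots> \<le> \<Phi> (x t1)"
    by (rule \<Phi>_lower)
  also have "\<dots> \<le> \<Phi> (x 0) - 0 * (t1 - 0)"
    using \<Phi>_nonneg c_pos before_t1 \<open>\<rho> \<le> r\<close>
    by (intro \<Phi>_decrease_along_solution[OF sol])
      (auto simp: t1 intro: order.strict_trans2[OF before_t1])
  also have "\<dots> \<le> B * (dist (x 0) xe)\<^sup>2"
    using \<Phi>_upper by simp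
  also have "\<dots> < B * (\<rho> * sqrt (A / B))\<^sup>2"
    using start B_pos by (intro mult_strict_left_mono power_strict_mono) auto
  also have "\<dots> = A * \<rho>\<^sup>2"
    using A_pos B_pos by (simp add: power_mult_distrib)
  finally show False
    by simp
qed

lemma lyapunov_stable:
  assumes "\<epsilon> > 0"
  shows "\<exists>\<delta>>0. \<forall>x T. is_solution_on f x {0..T} \<and> dist (x 0) xe < \<delta> \<longrightarrow>
                       (\<forall>t\<in>{0..T}. dist (x t) xe < \<epsilon>)"
proof -
  define \<rho> where "\<rho> = min \<epsilon> r"
  have "0 < \<rho>" "\<rho> \<le> r" "\<rho> \<le> \<epsilon>"
    using assms r_pos unfolding \<rho>_def by auto
  show ?thesis
  proof (intro exI conjI allI impI ballI)
    show "\<rho> * sqrt (A / B) > 0"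
      using \<open>0 < \<rho>\<close> A_pos B_pos by simp
    fix x T t
    assume "is_solution_on f x {0..T} \<and> dist (x 0) xe < \<rho> * sqrt (A / B)" "t \<in> {0..T}"
    with \<open>0 < \<rho>\<close> \<open>\<rho> \<le> r\<close> have "dist (x t) xe < \<rho>"
      using solution_stays_in_ball[of x T \<rho> t] by blast
    with \<open>\<rho> \<le> \<epsilon>\<close> show "dist (x t) xe < \<epsilon>"
      by simp
  qed
qed

text \<open>Near \<open>xe\<close> the function \<open>\<Phi>\<close> decreases at rate at least \<open>c \<eta>\<close> as long as it stays above
  \<open>\<eta>\<close>, so it cannot stay above \<open>\<eta>\<close> for longer than \<open>\<Phi> (x 0) / (c \<eta>)\<close>.\<close>
lemma \<Phi>_eventually_below:
  assumes sol: "\<And>T. is_solution_on f x {0..T}" and near: "\<And>t. 0 \<le> t \<Longrightarrow> dist (x t) xe < r"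
    and "\<eta> > 0"
  shows "\<exists>t0\<ge>0. \<Phi> (x t0) < \<eta>"
proof (rule ccontr)
  assume "\<not> ?thesis"
  then have large: "\<eta> \<le> \<Phi> (x t)" if "0 \<le> t" for t
    using that by force
  define T where "T = \<Phi> (x 0) / (c * \<eta>) + 1"
  have "T > 0"
    unfolding T_def using \<Phi>_nonneg[of "x 0"] c_pos \<open>\<eta> > 0\<close> by (simp add: add_nonneg_pos)
  have "\<Phi> (x T) \<le> \<Phi> (x 0) - (c * \<eta>) * (T - 0)"
    using \<open>T > 0\<close> near large c_pos by (intro \<Phi>_decrease_along_solution[OF sol]) auto
  also have "\<dots> = - (c * \<eta>)"
    unfolding T_def using c_pos \<open>\<eta> > 0\<close> by (simp add: field_simps)
  finally show False
    using \<Phi>_nonneg[of "x T"] c_pos \<open>\<eta> > 0\<close> by (smt (verit) mult_pos_pos)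
qed

lemma attractive:
  "\<exists>\<delta>>0. \<forall>x. is_solution_on f x {0..} \<and> dist (x 0) xe < \<delta> \<longrightarrow> (x \<longlongrightarrow> xe) at_top"
proof (intro exI conjI allI impI)
  show "r * sqrt (A / B) > 0"
    using r_pos A_pos B_pos by simp
  fix x assume x: "is_solution_on f x {0..} \<and> dist (x 0) xe < r * sqrt (A / B)"
  then have sol: "is_solution_on f x {0..T}" for T
    by (auto elim: is_solution_on_subset)
  have near: "dist (x t) xe < r" if "0 \<le> t" for t
    using solution_stays_in_ball[OF sol r_pos order.refl, of t] x that by auto
  have antimono: "\<Phi> (x t) \<le> \<Phi> (x s)" if "0 \<le> s" "s \<le> t" for s t
    using \<Phi>_decrease_along_solution[OF sol that order.refl, of 0] near that c_pos \<Phi>_nonneg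
    by simp
  show "(x \<longlongrightarrow> xe) at_top"
    unfolding tendsto_iff eventually_at_top_linorder
  proof (intro allI impI)
    fix e :: real assume "e > 0"
    then obtain t0 where t0: "t0 \<ge> 0" "\<Phi> (x t0) < A * e\<^sup>2"
      using \<Phi>_eventually_below[OF sol near, of "A * e\<^sup>2"] A_pos by auto
    have "dist (x t) xe < e" if "t \<ge> t0" for t
    proof -
      have "A * (dist (x t) xe)\<^sup>2 < A * e\<^sup>2"
        using \<Phi>_lower[of "x t"] antimono[OF t0(1) that] t0(2) by linarith
      then show ?thesis
        using A_pos \<open>e > 0\<close> by (simp add: power_less_imp_less_base)
    qed
    then show "\<exists>t0. \<forall>t\<ge>t0. dist (x t) xe < e"
      by blast
  qed
qed

theorem asymptotically_stable:
  assumes "f xe = 0"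
  shows "asymptotically_stable f xe"
  unfolding asymptotically_stable_def using assms lyapunov_stable attractive by blast

end

lemma quadratic_lyapunov_in_linear_coordinates:
  fixes f g :: "'a::real_normed_vector \<Rightarrow> 'a" and Q :: "'a \<Rightarrow> real"
  assumes T': "bounded_linear T'" and T'_T: "\<And>v. T' (T v) = v" and T_T': "\<And>v. T (T' v) = v"
    and K: "\<And>v. norm (T v) \<le> norm v * K" and K': "\<And>v. norm (T' v) \<le> norm v * K'"
    and field: "\<And>X. f (xe + T X) = T (g X)"
    and has_derivative_Q: "\<And>X. (Q has_derivative DQ X) (at X)"
    and Q_lower: "\<And>X. a * (norm X)\<^sup>2 \<le> Q X" and Q_upper: "\<And>X. Q X \<le> b * (norm X)\<^sup>2"
    and Q_decay: "\<And>X. norm X \<le> \<rho> \<Longrightarrow> DQ X (g X) \<le> - c * (norm X)\<^sup>2"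
    and "a > 0" "b > 0" "\<rho> > 0" "c > 0" "K > 0" "K' > 0"
  shows "quadratic_lyapunov f xe (\<lambda>y. Q (T' (y - xe))) (\<lambda>y h. DQ (T' (y - xe)) (T' h))
    (a / K\<^sup>2) (b * K'\<^sup>2) (\<rho> / K') (c / b)"
proof
  fix y
  have "((\<lambda>y. y - xe) has_derivative (\<lambda>h. h - 0)) (at y)"
    by (intro derivative_intros)
  from bounded_linear.has_derivative[OF T' this]
  have "((\<lambda>y. T' (y - xe)) has_derivative T') (at y)"
    by simp
  then show "((\<lambda>y. Q (T' (y - xe))) has_derivative (\<lambda>h. DQ (T' (y - xe)) (T' h))) (at y)"
    by (rule has_derivative_compose[OF _ has_derivative_Q])
  have dist_le: "dist y xe \<le> K * norm (T' (y - xe))" and norm_le: "norm (T' (y - xe)) \<le> K' * dist y xe"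
    using K[of "T' (y - xe)"] K'[of "y - xe"] unfolding T_T' dist_norm by (simp_all add: mult.commute)
  have "a / K\<^sup>2 * (dist y xe)\<^sup>2 \<le> a / K\<^sup>2 * (K * norm (T' (y - xe)))\<^sup>2"
    using dist_le \<open>a > 0\<close> by (intro mult_left_mono power_mono) auto
  also have "\<dots> \<le> Q (T' (y - xe))"
    using Q_lower \<open>K > 0\<close> by (simp add: power_mult_distrib)
  finally show "a / K\<^sup>2 * (dist y xe)\<^sup>2 \<le> Q (T' (y - xe))" .
  have "Q (T' (y - xe)) \<le> b * (norm (T' (y - xe)))\<^sup>2"
    by (rule Q_upper)
  also have "\<dots> \<le> b * (K' * dist y xe)\<^sup>2"
    using norm_le \<open>b > 0\<close> by (intro mult_left_mono power_mono) auto
  finally show "Q (T' (y - xe)) \<le> b * K'\<^sup>2 * (dist y xe)\<^sup>2"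
    by (simp add: power_mult_distrib)
  assume "dist y xe < \<rho> / K'"
  then have "norm (T' (y - xe)) \<le> \<rho>"
    using norm_le \<open>K' > 0\<close> by (simp add: field_simps)
  have "T' (f y) = g (T' (y - xe))"
    using field[of "T' (y - xe)"] T'_T T_T'[of "y - xe"] by simp
  then have "DQ (T' (y - xe)) (T' (f y)) \<le> - c * (norm (T' (y - xe)))\<^sup>2"
    using Q_decay[OF \<open>norm (T' (y - xe)) \<le> \<rho>\<close>] by simp
  also have "\<dots> \<le> - (c / b) * Q (T' (y - xe))"
    using mult_left_mono[OF Q_upper, of "c / b"] \<open>b > 0\<close> \<open>c > 0\<close> by simp
  finally show "DQ (T' (y - xe)) (T' (f y)) \<le> - (c / b) * Q (T' (y - xe))" .
qed (use \<open>a > 0\<close> \<open>b > 0\<close> \<open>\<rho> > 0\<close> \<open>c > 0\<close> \<open>K > 0\<close> \<open>K' > 0\<close> in auto)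

lemma asymptotically_stable_by_transformed_lyapunov:
  fixes f g :: "'a::real_normed_vector \<Rightarrow> 'a" and Q :: "'a \<Rightarrow> real"
  assumes T: "bounded_linear T" and T': "bounded_linear T'"
    and T'_T: "\<And>v. T' (T v) = v" and T_T': "\<And>v. T (T' v) = v"
    and field: "\<And>X. f (xe + T X) = T (g X)" and "g 0 = 0"
    and has_derivative_Q: "\<And>X. (Q has_derivative DQ X) (at X)"
    and Q_lower: "\<And>X. a * (norm X)\<^sup>2 \<le> Q X" and Q_upper: "\<And>X. Q X \<le> b * (norm X)\<^sup>2"
    and Q_decay: "\<And>X. norm X \<le> \<rho> \<Longrightarrow> DQ X (g X) \<le> - c * (norm X)\<^sup>2"
    and "a > 0" "b > 0" "\<rho> > 0" "c > 0"
  shows "asymptotically_stable f xe"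
proof -
  obtain K where "K > 0" "\<And>v. norm (T v) \<le> norm v * K"
    using bounded_linear.pos_bounded[OF T] by blast
  moreover obtain K' where "K' > 0" "\<And>v. norm (T' v) \<le> norm v * K'"
    using bounded_linear.pos_bounded[OF T'] by blast
  ultimately have "quadratic_lyapunov f xe (\<lambda>y. Q (T' (y - xe))) (\<lambda>y h. DQ (T' (y - xe)) (T' h))
    (a / K\<^sup>2) (b * K'\<^sup>2) (\<rho> / K') (c / b)"
    using assms by (intro quadratic_lyapunov_in_linear_coordinates[where g = g]) auto
  moreover have "f xe = 0"
    using field[of 0] \<open>g 0 = 0\<close> linear_simps(3)[OF T] by simp
  ultimately show ?thesis
    by (rule quadratic_lyapunov.asymptotically_stable)
qed

section \<open>A quadratic Lyapunov form in relative coordinates\<close>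

lemma norm5_squared:
  "(norm (x1, x2, x3, x4, x5 :: real))\<^sup>2 = x1\<^sup>2 + x2\<^sup>2 + x3\<^sup>2 + x4\<^sup>2 + x5\<^sup>2"
  by (simp add: norm_Pair)

lemma abs_le_norm5:
  fixes x y z u w :: real
  shows "\<bar>x\<bar> \<le> norm (x, y, z, u, w)" "\<bar>y\<bar> \<le> norm (x, y, z, u, w)"
    "\<bar>z\<bar> \<le> norm (x, y, z, u, w)"
  by (rule power2_le_imp_le; simp add: norm5_squared)+

fun scale5 :: "state5 \<Rightarrow> state5 \<Rightarrow> state5" where
  "scale5 (a1, a2, a3, a4, a5) (x1, x2, x3, x4, x5) = (a1 * x1, a2 * x2, a3 * x3, a4 * x4, a5 * x5)"

lemma norm_scale5_le: "norm (scale5 a x) \<le> norm a * norm x"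
proof -
  obtain a1 a2 a3 a4 a5 x1 x2 x3 x4 x5 where
    ax: "a = (a1, a2, a3, a4, a5)" "x = (x1, x2, x3, x4, x5)"
    by (cases a, cases x) auto
  have "(a1 * x1)\<^sup>2 + (a2 * x2)\<^sup>2 + (a3 * x3)\<^sup>2 + (a4 * x4)\<^sup>2 + (a5 * x5)\<^sup>2
    \<le> (a1\<^sup>2 + a2\<^sup>2 + a3\<^sup>2 + a4\<^sup>2 + a5\<^sup>2) * (x1\<^sup>2 + x2\<^sup>2 + x3\<^sup>2 + x4\<^sup>2 + x5\<^sup>2)"
    by (simp add: power_mult_distrib algebra_simps)
  then have "(norm (scale5 a x))\<^sup>2 \<le> (norm a * norm x)\<^sup>2"
    unfolding ax by (simp only: scale5.simps power_mult_distrib[of "norm _"] norm5_squared)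
  then show ?thesis
    by (rule power2_le_imp_le) simp
qed

lemma bounded_linear_scale5: "bounded_linear (scale5 a)"
proof (rule bounded_linear_intro)
  show "scale5 a (x + y) = scale5 a x + scale5 a y" "scale5 a (r *\<^sub>R x) = r *\<^sub>R scale5 a x"
    for x y r
    by (cases a, cases x, cases y, simp add: algebra_simps)+
  show "norm (scale5 a x) \<le> norm x * norm a" for x
    using norm_scale5_le by (simp add: mult.commute)
qed

lemma scale5_scale5: "scale5 a (scale5 b x) = scale5 (scale5 a b) x"
  by (cases a, cases b, cases x) (simp add: mult.assoc)

fun deviation_field :: "real \<Rightarrow> real \<Rightarrow> real \<Rightarrow> real \<Rightarrow> real \<Rightarrow> state5 \<Rightarrow> state5" where
  "deviation_field q b m n \<mu> (x, y, z, u, w) =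
     (- (q + b) * x - q * z - q * x * z, m * (x - y + z + x * z), n * (y - z),
      \<mu> * (z - u), \<mu> * (x - w))"

fun lyapunov_form :: "real \<Rightarrow> real \<Rightarrow> real \<Rightarrow> real \<Rightarrow> real \<Rightarrow> state5 \<Rightarrow> real" where
  "lyapunov_form q m n \<epsilon> \<kappa> (x, y, z, u, w) =
     (m / q * x\<^sup>2 + y\<^sup>2 + m / n * z\<^sup>2) / 2 + \<epsilon> * x * z + \<kappa> * (u\<^sup>2 + w\<^sup>2)"

fun lyapunov_form_deriv :: "real \<Rightarrow> real \<Rightarrow> real \<Rightarrow> real \<Rightarrow> real \<Rightarrow> state5 \<Rightarrow> state5 \<Rightarrow> real" where
  "lyapunov_form_deriv q m n \<epsilon> \<kappa> (x, y, z, u, w) (h1, h2, h3, h4, h5) =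
     (m / q * x + \<epsilon> * z) * h1 + y * h2 + (m / n * z + \<epsilon> * x) * h3 + 2 * \<kappa> * (u * h4 + w * h5)"

lemma has_derivative_lyapunov_form:
  "(lyapunov_form q m n \<epsilon> \<kappa> has_derivative lyapunov_form_deriv q m n \<epsilon> \<kappa> X) (at X)"
proof -
  define a b where "a = m / q" and "b = m / n"
  have "lyapunov_form q m n \<epsilon> \<kappa> = (\<lambda>X. (a * (fst X)\<^sup>2 + (fst (snd X))\<^sup>2
      + b * (fst (snd (snd X)))\<^sup>2) / 2 + \<epsilon> * fst X * fst (snd (snd X))
      + \<kappa> * ((fst (snd (snd (snd X))))\<^sup>2 + (snd (snd (snd (snd X))))\<^sup>2))"
    by (simp add: fun_eq_iff split_paired_All a_def b_def)
  moreover have "lyapunov_form_deriv q m n \<epsilon> \<kappa> X = (\<lambda>H. (a * fst X + \<epsilon> * fst (snd (snd X))) * fst H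
      + fst (snd X) * fst (snd H) + (b * fst (snd (snd X)) + \<epsilon> * fst X) * fst (snd (snd H))
      + 2 * \<kappa> * (fst (snd (snd (snd X))) * fst (snd (snd (snd H)))
                 + snd (snd (snd (snd X))) * snd (snd (snd (snd H)))))"
    by (cases X) (simp add: fun_eq_iff split_paired_All a_def b_def)
  ultimately show ?thesis
    by (simp only:) (auto intro!: derivative_eq_intros ext simp: algebra_simps power2_eq_square)
qed

lemma two_mult_le_weighted_squares:
  fixes a b s :: real
  assumes "s > 0"
  shows "2 * (a * b) \<le> s * a\<^sup>2 + b\<^sup>2 / s"
proof -
  have "0 \<le> (s * a - b)\<^sup>2 / s"
    using assms by simp
  also have "\<dots> = s * a\<^sup>2 + b\<^sup>2 / s - 2 * (a * b)"
    using assms by (simp add: field_simps power2_eq_square)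
  finally show ?thesis
    by simp
qed

lemma lyapunov_form_lower:
  assumes "q > 0" "m > 0" "n > 0" "\<epsilon> > 0" "\<kappa> \<ge> 0" and small_\<epsilon>: "4 * q * n * \<epsilon>\<^sup>2 \<le> m\<^sup>2"
  shows "min (min (m / (4 * q)) (1 / 2)) (min (m / (4 * n)) \<kappa>) * (norm X)\<^sup>2
    \<le> lyapunov_form q m n \<epsilon> \<kappa> X"
proof -
  obtain x y z u w where X: "X = (x, y, z, u, w)"
    by (cases X) auto
  define a where "a = min (min (m / (4 * q)) (1 / 2)) (min (m / (4 * n)) \<kappa>)"
  define cx cz where "cx = m / (4 * q)" and "cz = m / (4 * n)"
  define s where "s = m / (2 * q * \<epsilon>)"
  have "s > 0"
    using assms unfolding s_def by simp
  have "\<epsilon> / 2 * (2 * (x * - z)) \<le> \<epsilon> / 2 * (s * x\<^sup>2 + (- z)\<^sup>2 / s)"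
    using two_mult_le_weighted_squares[OF \<open>s > 0\<close>, of x "- z"] \<open>\<epsilon> > 0\<close>
    by (intro mult_left_mono) auto
  also have "\<dots> = cx * x\<^sup>2 + q * \<epsilon>\<^sup>2 / m * z\<^sup>2"
    using assms unfolding s_def cx_def by (simp add: field_simps power2_eq_square)
  also have "\<dots> \<le> cx * x\<^sup>2 + cz * z\<^sup>2"
    using assms unfolding cz_def
    by (intro add_left_mono mult_right_mono) (auto simp: field_simps power2_eq_square)
  finally have cross: "- (\<epsilon> * x * z) \<le> cx * x\<^sup>2 + cz * z\<^sup>2"
    by simp
  have "a * x\<^sup>2 \<le> cx * x\<^sup>2" "a * y\<^sup>2 \<le> 1 / 2 * y\<^sup>2" "a * z\<^sup>2 \<le> cz * z\<^sup>2"
    "a * u\<^sup>2 \<le> \<kappa> * u\<^sup>2" "a * w\<^sup>2 \<le> \<kappa> * w\<^sup>2"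
    unfolding a_def cx_def cz_def by (intro mult_right_mono; simp)+
  moreover have "a * (norm X)\<^sup>2 = a * x\<^sup>2 + a * y\<^sup>2 + a * z\<^sup>2 + a * u\<^sup>2 + a * w\<^sup>2"
    unfolding X norm5_squared by (simp add: algebra_simps)
  moreover have "lyapunov_form q m n \<epsilon> \<kappa> X
      = 2 * (cx * x\<^sup>2) + 1 / 2 * y\<^sup>2 + 2 * (cz * z\<^sup>2) + \<epsilon> * x * z + \<kappa> * u\<^sup>2 + \<kappa> * w\<^sup>2"
    unfolding X cx_def cz_def by (simp add: algebra_simps)
  ultimately show ?thesis
    using cross unfolding a_def[symmetric] by linarith
qed

lemma lyapunov_form_upper:
  assumes "q > 0" "m > 0" "n > 0" "\<epsilon> \<ge> 0" "\<kappa> \<ge> 0"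
  shows "lyapunov_form q m n \<epsilon> \<kappa> X \<le> (m / q + 1 + m / n + \<epsilon> + \<kappa>) * (norm X)\<^sup>2"
proof -
  obtain x y z u w where X: "X = (x, y, z, u, w)"
    by (cases X) auto
  define N where "N = (norm X)\<^sup>2"
  define cx cz where "cx = m / q" and "cz = m / n"
  have N: "0 \<le> N" "x\<^sup>2 \<le> N" "y\<^sup>2 \<le> N" "z\<^sup>2 \<le> N" "u\<^sup>2 + w\<^sup>2 \<le> N" "x\<^sup>2 + z\<^sup>2 \<le> 2 * N"
    unfolding N_def X norm5_squared by auto
  have "\<epsilon> * (2 * (x * z)) \<le> \<epsilon> * (1 * x\<^sup>2 + z\<^sup>2 / 1)"
    using two_mult_le_weighted_squares[of 1 x z] assms by (intro mult_left_mono) auto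
  also have "\<dots> \<le> \<epsilon> * (2 * N)"
    using N assms by (intro mult_left_mono) auto
  finally have "\<epsilon> * x * z \<le> \<epsilon> * N"
    by (simp add: algebra_simps)
  moreover have "cx * x\<^sup>2 \<le> cx * N" "cz * z\<^sup>2 \<le> cz * N" "\<kappa> * (u\<^sup>2 + w\<^sup>2) \<le> \<kappa> * N"
    "0 \<le> cx * N" "0 \<le> cz * N"
    using N assms unfolding cx_def cz_def by (intro mult_left_mono mult_nonneg_nonneg; simp)+
  moreover have "(cx + 1 + cz + \<epsilon> + \<kappa>) * N = cx * N + N + cz * N + \<epsilon> * N + \<kappa> * N"
    by (simp add: algebra_simps)
  moreover have "lyapunov_form q m n \<epsilon> \<kappa> X = 1 / 2 * (cx * x\<^sup>2) + 1 / 2 * y\<^sup>2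
      + 1 / 2 * (cz * z\<^sup>2) + \<epsilon> * x * z + \<kappa> * (u\<^sup>2 + w\<^sup>2)"
    unfolding X cx_def cz_def by (simp add: algebra_simps)
  ultimately show ?thesis
    unfolding N_def[symmetric] cx_def[symmetric] cz_def[symmetric] using N by linarith
qed

lemma lyapunov_epsilon_bounds:
  fixes q b m n \<epsilon> :: real
  assumes "q > 0" "b > 0" "m > 0" "n > 0" and \<epsilon>: "\<epsilon> = m / (4 * n + 2 * (q + b))"
  shows "\<epsilon> > 0" "\<epsilon> * n \<le> m / 4" "\<epsilon> * (q + b) \<le> m / 2" "4 * q * n * \<epsilon>\<^sup>2 \<le> m\<^sup>2"
proof -
  show "\<epsilon> > 0"
    using assms by simp
  then have "0 < \<epsilon> * n" "0 < \<epsilon> * q" "0 < \<epsilon> * b"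
    using assms by simp_all
  moreover have "4 * (\<epsilon> * n) + 2 * (\<epsilon> * q) + 2 * (\<epsilon> * b) = m"
    using assms by (simp add: field_simps)
  ultimately have "\<epsilon> * n \<le> m / 4" "\<epsilon> * (q + b) \<le> m / 2" and \<epsilon>q: "\<epsilon> * q \<le> m / 2"
    by (simp_all only: distrib_left; linarith)+
  then show "\<epsilon> * n \<le> m / 4" "\<epsilon> * (q + b) \<le> m / 2"
    by simp_all
  have "4 * q * n * \<epsilon>\<^sup>2 = 4 * (\<epsilon> * q) * (\<epsilon> * n)"
    by (simp add: power2_eq_square algebra_simps)
  also have "\<dots> \<le> 4 * (m / 2) * (m / 4)"
    using \<epsilon>q \<open>\<epsilon> * n \<le> m / 4\<close> \<open>0 < \<epsilon> * n\<close> \<open>0 < \<epsilon> * q\<close> by (intro mult_mono) auto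
  also have "\<dots> \<le> m\<^sup>2"
    by (simp add: power2_eq_square)
  finally show "4 * q * n * \<epsilon>\<^sup>2 \<le> m\<^sup>2" .
qed

lemma lyapunov_cross_terms_bound:
  fixes m q d \<epsilon> \<theta> x \<omega> z :: real
  assumes "0 < q" "q \<le> d" "0 \<le> \<epsilon>" "\<epsilon> * d \<le> m / 2" "0 \<le> \<theta>" "\<theta> \<le> 5 / 4 * m"
  shows "\<theta> * (x * \<omega>) - \<epsilon> * d * (x * z)
    \<le> 25 / 48 * (m * x\<^sup>2) + 3 / 4 * (m * \<omega>\<^sup>2) + 1 / 4 * (m * d / q * x\<^sup>2) + \<epsilon> * q / 2 * z\<^sup>2"
proof -
  have "2 * (x * \<omega>) \<le> 5 / 6 * x\<^sup>2 + \<omega>\<^sup>2 / (5 / 6)"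
    by (rule two_mult_le_weighted_squares) simp
  then have "\<theta> * (x * \<omega>) \<le> \<theta> * (5 / 12 * x\<^sup>2 + 3 / 5 * \<omega>\<^sup>2)"
    using assms by (intro mult_left_mono) auto
  also have "\<dots> \<le> 5 / 4 * m * (5 / 12 * x\<^sup>2 + 3 / 5 * \<omega>\<^sup>2)"
    using assms by (intro mult_right_mono) auto
  finally have x\<omega>: "\<theta> * (x * \<omega>) \<le> 25 / 48 * (m * x\<^sup>2) + 3 / 4 * (m * \<omega>\<^sup>2)"
    by (simp add: algebra_simps)
  have "\<epsilon> * d / 2 * (2 * (x * - z)) \<le> \<epsilon> * d / 2 * (d / q * x\<^sup>2 + (- z)\<^sup>2 / (d / q))"
    using two_mult_le_weighted_squares[of "d / q" x "- z"] assms by (intro mult_left_mono) auto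
  also have "\<dots> = \<epsilon> * d * (d / (2 * q) * x\<^sup>2) + \<epsilon> * q / 2 * z\<^sup>2"
    using assms by (simp add: field_simps power2_eq_square)
  also have "\<dots> \<le> m / 2 * (d / (2 * q) * x\<^sup>2) + \<epsilon> * q / 2 * z\<^sup>2"
    using assms by (intro add_right_mono mult_right_mono) auto
  finally have "- (\<epsilon> * d * (x * z)) \<le> 1 / 4 * (m * d / q * x\<^sup>2) + \<epsilon> * q / 2 * z\<^sup>2"
    by (simp add: algebra_simps)
  with x\<omega> show ?thesis
    by linarith
qed

text \<open>The cross term \<open>\<epsilon> x z\<close> of the Lyapunov form is essential: without it the derivative
  along the linear part, \<open>-(m (q + b) / q) x\<^sup>2 + m x (y - z) - m (y - z)\<^sup>2\<close> in the first three
  coordinates, vanishes on the line \<open>x = 0, y = z\<close>.\<close>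
lemma linearized_lyapunov_decay:
  fixes q b m n \<mu> \<epsilon> \<eta> x y z u w :: real
  assumes pos: "q > 0" "b > 0" "m > 0" "n > 0" "\<mu> > 0"
    and \<epsilon>: "\<epsilon> = m / (4 * n + 2 * (q + b))" and \<eta>: "\<eta> = \<epsilon> * q / 8"
  shows "(m / q * x + \<epsilon> * z) * (- (q + b) * x - q * z) + y * (m * (x - y + z))
      + (m / n * z + \<epsilon> * x) * (n * (y - z)) + 2 * (\<eta> / \<mu>) * (u * (\<mu> * (z - u)) + w * (\<mu> * (x - w)))
    \<le> - \<eta> * (norm (x, y, z, u, w))\<^sup>2"
proof -
  define d \<omega> \<theta> a where "d = q + b" and "\<omega> = y - z" and "\<theta> = m + \<epsilon> * n" and "a = m * d / q"
  note \<epsilon>_bounds = lyapunov_epsilon_bounds[OF pos(1-4) \<epsilon>, folded d_def]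
  have "q \<le> d"
    using pos unfolding d_def by simp
  then have "m \<le> a" and \<epsilon>qd: "\<epsilon> * q \<le> \<epsilon> * d"
    using pos \<epsilon>_bounds(1) unfolding a_def by (simp add: field_simps, intro mult_left_mono, auto)
  have "\<eta> > 0"
    using pos \<epsilon>_bounds(1) unfolding \<eta> by simp
  have "16 * \<eta> \<le> m"
    using \<epsilon>_bounds(3) \<epsilon>qd unfolding \<eta> by linarith
  have expand: "(m / q * x + \<epsilon> * z) * (- (q + b) * x - q * z) + y * (m * (x - y + z))
      + (m / n * z + \<epsilon> * x) * (n * (y - z)) + 2 * (\<eta> / \<mu>) * (u * (\<mu> * (z - u)) + w * (\<mu> * (x - w)))
    = - (a * x\<^sup>2) + (\<theta> * (x * \<omega>) - \<epsilon> * d * (x * z)) - m * \<omega>\<^sup>2 - 8 * (\<eta> * z\<^sup>2)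
      + \<eta> * (2 * (u * z) + 2 * (w * x) - 2 * u\<^sup>2 - 2 * w\<^sup>2)"
    using pos unfolding a_def \<theta>_def \<omega>_def d_def \<eta> by (simp add: field_simps power2_eq_square)
  have "\<theta> * (x * \<omega>) - \<epsilon> * d * (x * z) \<le> 25 / 48 * (m * x\<^sup>2) + 3 / 4 * (m * \<omega>\<^sup>2) + 1 / 4 * (a * x\<^sup>2) + 4 * (\<eta> * z\<^sup>2)"
    using lyapunov_cross_terms_bound[of q d \<epsilon> m \<theta> x \<omega> z] pos \<epsilon>_bounds \<open>q \<le> d\<close>
    unfolding a_def \<theta>_def \<eta> by (simp add: algebra_simps)
  moreover have "\<eta> * (2 * (u * z) + 2 * (w * x) - 2 * u\<^sup>2 - 2 * w\<^sup>2) \<le> \<eta> * (z\<^sup>2 + x\<^sup>2 - u\<^sup>2 - w\<^sup>2)"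
    using \<open>\<eta> > 0\<close> two_mult_le_weighted_squares[of 1 u z] two_mult_le_weighted_squares[of 1 w x]
    by (intro mult_left_mono) auto
  then have "\<eta> * (2 * (u * z) + 2 * (w * x) - 2 * u\<^sup>2 - 2 * w\<^sup>2)
      \<le> \<eta> * z\<^sup>2 + \<eta> * x\<^sup>2 - \<eta> * u\<^sup>2 - \<eta> * w\<^sup>2"
    by (simp add: algebra_simps)
  moreover have "\<eta> * y\<^sup>2 \<le> \<eta> * (2 * \<omega>\<^sup>2 + 2 * z\<^sup>2)"
    using \<open>\<eta> > 0\<close> two_mult_le_weighted_squares[of 1 \<omega> z] unfolding \<omega>_def
    by (intro mult_left_mono) (auto simp: power2_eq_square algebra_simps)
  then have "\<eta> * y\<^sup>2 \<le> 2 * (\<eta> * \<omega>\<^sup>2) + 2 * (\<eta> * z\<^sup>2)"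
    by (simp add: algebra_simps)
  moreover have "16 * (\<eta> * x\<^sup>2) \<le> m * x\<^sup>2" "16 * (\<eta> * \<omega>\<^sup>2) \<le> m * \<omega>\<^sup>2" "m * x\<^sup>2 \<le> a * x\<^sup>2"
    using \<open>16 * \<eta> \<le> m\<close> \<open>m \<le> a\<close> by (simp_all add: mult_right_mono flip: mult.assoc)
  moreover have "0 \<le> m * x\<^sup>2" "0 \<le> m * \<omega>\<^sup>2"
    using pos by simp_all
  moreover have "- \<eta> * (norm (x, y, z, u, w))\<^sup>2
      = - (\<eta> * x\<^sup>2) - \<eta> * y\<^sup>2 - \<eta> * z\<^sup>2 - \<eta> * u\<^sup>2 - \<eta> * w\<^sup>2"
    unfolding norm5_squared by (simp add: algebra_simps)
  ultimately show ?thesis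
    unfolding expand by linarith
qed

lemma quadratic_terms_bound:
  fixes q m \<epsilon> \<eta> \<rho> x y z :: real
  assumes "q > 0" "m > 0" "\<epsilon> > 0"
    and "\<bar>x\<bar> \<le> \<rho>" "\<bar>y\<bar> \<le> \<rho>" "\<bar>z\<bar> \<le> \<rho>" "(2 * m + \<epsilon> * q) * \<rho> \<le> \<eta>"
  shows "(m / q * x + \<epsilon> * z) * (- q * x * z) + y * (m * x * z) \<le> \<eta> / 2 * (x\<^sup>2 + z\<^sup>2)"
proof -
  have "\<bar>m * y\<bar> = m * \<bar>y\<bar>" "\<bar>m * x\<bar> = m * \<bar>x\<bar>" "\<bar>\<epsilon> * q * z\<bar> = \<epsilon> * q * \<bar>z\<bar>"
    using assms by (simp_all add: abs_mult)
  then have "\<bar>m * y - m * x - \<epsilon> * q * z\<bar> \<le> m * \<bar>y\<bar> + m * \<bar>x\<bar> + \<epsilon> * q * \<bar>z\<bar>"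
    by linarith
  also have "\<dots> \<le> m * \<rho> + m * \<rho> + \<epsilon> * q * \<rho>"
    using assms by (intro add_mono mult_left_mono) auto
  also have "\<dots> = (2 * m + \<epsilon> * q) * \<rho>"
    by (simp add: algebra_simps)
  finally have coeff: "\<bar>m * y - m * x - \<epsilon> * q * z\<bar> \<le> \<eta>"
    using assms by linarith
  have "(m / q * x + \<epsilon> * z) * (- q * x * z) + y * (m * x * z) = (x * z) * (m * y - m * x - \<epsilon> * q * z)"
    using assms by (simp add: field_simps)
  also have "\<dots> \<le> \<bar>x * z\<bar> * \<bar>m * y - m * x - \<epsilon> * q * z\<bar>"
    by (metis abs_ge_self abs_mult)
  also have "\<dots> \<le> \<bar>x * z\<bar> * \<eta>"
    using coeff by (intro mult_left_mono) auto
  also have "\<dots> \<le> (x\<^sup>2 + z\<^sup>2) / 2 * \<eta>"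
    using two_mult_le_weighted_squares[of 1 "\<bar>x\<bar>" "\<bar>z\<bar>"] coeff
    by (intro mult_right_mono) (auto simp: abs_mult)
  finally show ?thesis
    by (simp add: algebra_simps)
qed

lemma lyapunov_form_deriv_deviation_field_le:
  assumes "q > 0" "b > 0" "m > 0" "n > 0" "\<mu> > 0"
    and \<epsilon>: "\<epsilon> = m / (4 * n + 2 * (q + b))" and \<eta>: "\<eta> = \<epsilon> * q / 8"
    and small: "norm X \<le> \<eta> / (2 * m + \<epsilon> * q)"
  shows "lyapunov_form_deriv q m n \<epsilon> (\<eta> / \<mu>) X (deviation_field q b m n \<mu> X) \<le> - \<eta> / 2 * (norm X)\<^sup>2"
proof -
  obtain x y z u w where X: "X = (x, y, z, u, w)"
    by (cases X) auto
  have "\<epsilon> > 0" "\<eta> > 0"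
    using assms unfolding \<epsilon> \<eta> by simp_all
  then have "0 < 2 * m + \<epsilon> * q"
    using assms by (simp add: add_pos_pos)
  then have "(2 * m + \<epsilon> * q) * norm X \<le> \<eta>"
    using small by (metis pos_le_divide_eq mult.commute)
  then have "(m / q * x + \<epsilon> * z) * (- q * x * z) + y * (m * x * z) \<le> \<eta> / 2 * (x\<^sup>2 + z\<^sup>2)"
    unfolding X by (rule quadratic_terms_bound[OF assms(1,3) \<open>\<epsilon> > 0\<close> abs_le_norm5])
  also have "\<dots> \<le> \<eta> / 2 * (norm X)\<^sup>2"
    using \<open>\<eta> > 0\<close> unfolding X norm5_squared by (intro mult_left_mono) auto
  moreover have "lyapunov_form_deriv q m n \<epsilon> (\<eta> / \<mu>) X (deviation_field q b m n \<mu> X)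
    = ((m / q * x + \<epsilon> * z) * (- (q + b) * x - q * z) + y * (m * (x - y + z))
        + (m / n * z + \<epsilon> * x) * (n * (y - z)) + 2 * (\<eta> / \<mu>) * (u * (\<mu> * (z - u)) + w * (\<mu> * (x - w))))
      + ((m / q * x + \<epsilon> * z) * (- q * x * z) + y * (m * x * z))"
    unfolding X by (simp add: algebra_simps)
  ultimately show ?thesis
    using linearized_lyapunov_decay[OF assms(1-5) \<epsilon> \<eta>, where x = x and y = y and z = z and u = u and w = w] unfolding X by linarith
qed

section \<open>The SEIRV model\<close>

lemma scale5_inverse:
  assumes "a1 \<noteq> 0" "a2 \<noteq> 0" "a3 \<noteq> 0" "a4 \<noteq> 0" "a5 \<noteq> 0"
  shows "scale5 (1 / a1, 1 / a2, 1 / a3, 1 / a4, 1 / a5) (scale5 (a1, a2, a3, a4, a5) v) = v"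
    and "scale5 (a1, a2, a3, a4, a5) (scale5 (1 / a1, 1 / a2, 1 / a3, 1 / a4, 1 / a5) v) = v"
  using assms by (simp_all add: scale5_scale5, cases v, simp)+

lemma seirv_field_relative_coordinates:
  fixes N \<mu> \<beta> \<sigma> \<gamma> p \<rho> Se Ee Ie Re Ve :: real
  assumes "seirv_field N \<mu> \<beta> \<sigma> \<gamma> p \<rho> (Se, Ee, Ie, Re, Ve) = 0"
  shows "seirv_field N \<mu> \<beta> \<sigma> \<gamma> p \<rho> ((Se, Ee, Ie, Re, Ve) + scale5 (Se, Ee, Ie, Re, Ve) X)
    = scale5 (Se, Ee, Ie, Re, Ve)
        (deviation_field (\<beta> / N * (1 - \<rho>) * Ie) (p / N + \<mu>) (\<sigma> + \<mu>) (\<gamma> + \<mu>) \<mu> X)"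
proof -
  obtain x y z u w where X: "X = (x, y, z, u, w)"
    by (cases X) auto
  have "\<mu> * N - \<beta> / N * Se * (1 - \<rho>) * Ie - p / N * Se - \<mu> * Se = 0"
    "\<beta> / N * Se * (1 - \<rho>) * Ie - (\<sigma> + \<mu>) * Ee = 0" "\<sigma> * Ee - (\<gamma> + \<mu>) * Ie = 0"
    "\<gamma> * Ie - \<mu> * Re = 0" "p / N * Se - \<mu> * Ve = 0"
    using assms by (simp_all add: seirv_field_def zero_prod_def)
  then show ?thesis
    unfolding X by (simp add: seirv_field_def) algebra
qed

lemma seirv_positive_equilibrium_asymptotically_stable:
  fixes N \<mu> \<beta> \<sigma> \<gamma> p \<rho> Se Ee Ie Re Ve :: real
  assumes "N > 0" "\<mu> > 0" "\<beta> > 0" "\<sigma> > 0" "\<gamma> > 0" "p > 0" "\<rho> < 1"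
    and "Se > 0" "Ee > 0" "Ie > 0" "Re > 0" "Ve > 0"
    and equilibrium: "seirv_field N \<mu> \<beta> \<sigma> \<gamma> p \<rho> (Se, Ee, Ie, Re, Ve) = 0"
  shows "asymptotically_stable (seirv_field N \<mu> \<beta> \<sigma> \<gamma> p \<rho>) (Se, Ee, Ie, Re, Ve)"
proof -
  define q b m n where "q = \<beta> / N * (1 - \<rho>) * Ie" and "b = p / N + \<mu>"
    and "m = \<sigma> + \<mu>" and "n = \<gamma> + \<mu>"
  define \<epsilon> \<eta> where "\<epsilon> = m / (4 * n + 2 * (q + b))" and "\<eta> = \<epsilon> * q / 8"
  have pos: "q > 0" "b > 0" "m > 0" "n > 0"
    using assms unfolding q_def b_def m_def n_def by (simp_all add: add_pos_pos)
  then have "\<epsilon> > 0" "\<eta> > 0"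
    unfolding \<epsilon>_def \<eta>_def by auto
  show ?thesis
  proof (rule asymptotically_stable_by_transformed_lyapunov)
    show "bounded_linear (scale5 (Se, Ee, Ie, Re, Ve))"
      "bounded_linear (scale5 (1 / Se, 1 / Ee, 1 / Ie, 1 / Re, 1 / Ve))"
      by (rule bounded_linear_scale5)+
    show "scale5 (1 / Se, 1 / Ee, 1 / Ie, 1 / Re, 1 / Ve) (scale5 (Se, Ee, Ie, Re, Ve) v) = v"
      "scale5 (Se, Ee, Ie, Re, Ve) (scale5 (1 / Se, 1 / Ee, 1 / Ie, 1 / Re, 1 / Ve) v) = v" for v
      using assms by (simp_all add: scale5_inverse)
    show "seirv_field N \<mu> \<beta> \<sigma> \<gamma> p \<rho> ((Se, Ee, Ie, Re, Ve) + scale5 (Se, Ee, Ie, Re, Ve) X)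
      = scale5 (Se, Ee, Ie, Re, Ve) (deviation_field q b m n \<mu> X)" for X
      unfolding q_def b_def m_def n_def by (rule seirv_field_relative_coordinates[OF equilibrium])
    show "deviation_field q b m n \<mu> 0 = 0"
      by (simp add: zero_prod_def)
    show "(lyapunov_form q m n \<epsilon> (\<eta> / \<mu>) has_derivative lyapunov_form_deriv q m n \<epsilon> (\<eta> / \<mu>) X) (at X)"
      for X by (rule has_derivative_lyapunov_form)
    show "min (min (m / (4 * q)) (1 / 2)) (min (m / (4 * n)) (\<eta> / \<mu>)) * (norm X)\<^sup>2
      \<le> lyapunov_form q m n \<epsilon> (\<eta> / \<mu>) X" for X
      using pos \<open>\<epsilon> > 0\<close> \<open>\<eta> > 0\<close> \<open>\<mu> > 0\<close> lyapunov_epsilon_bounds[OF pos \<epsilon>_def]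
      by (intro lyapunov_form_lower) auto
    show "lyapunov_form q m n \<epsilon> (\<eta> / \<mu>) X \<le> (m / q + 1 + m / n + \<epsilon> + \<eta> / \<mu>) * (norm X)\<^sup>2" for X
      using pos \<open>\<epsilon> > 0\<close> \<open>\<eta> > 0\<close> assms by (intro lyapunov_form_upper) auto
    show "lyapunov_form_deriv q m n \<epsilon> (\<eta> / \<mu>) X (deviation_field q b m n \<mu> X) \<le> - (\<eta> / 2) * (norm X)\<^sup>2"
      if "norm X \<le> \<eta> / (2 * m + \<epsilon> * q)" for X
      using lyapunov_form_deriv_deviation_field_le[OF pos \<open>\<mu> > 0\<close> \<epsilon>_def \<eta>_def that] by simp
  qed (use pos \<open>\<epsilon> > 0\<close> \<open>\<eta> > 0\<close> assms in \<open>auto intro!: add_pos_pos divide_pos_pos\<close>)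
qed

lemma seirv_endemic_equilibrium:
  fixes N \<mu> \<beta> \<sigma> \<gamma> p \<rho> :: real
  assumes pos: "N > 0" "\<mu> > 0" "\<beta> > 0" "\<sigma> > 0" "\<gamma> > 0" "\<rho> < 1"
  defines "Se \<equiv> (\<sigma> + \<mu>) * (\<gamma> + \<mu>) * N / (\<sigma> * \<beta> * (1 - \<rho>))"
    and "Ie \<equiv> (\<mu> * N * \<sigma> * \<beta> * (1 - \<rho>) - (\<sigma> + \<mu>) * (\<gamma> + \<mu>) * (p + \<mu> * N))
              / ((\<sigma> + \<mu>) * (\<gamma> + \<mu>) * \<beta> * (1 - \<rho>))"
  shows "seirv_field N \<mu> \<beta> \<sigma> \<gamma> p \<rho> (Se, (\<gamma> + \<mu>) / \<sigma> * Ie, Ie, \<gamma> / \<mu> * Ie, p / (\<mu> * N) * Se) = 0"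
proof -
  define K t where "K = (\<sigma> + \<mu>) * (\<gamma> + \<mu>)" and "t = 1 - \<rho>"
  have "K > 0" "t > 0"
    using pos unfolding K_def t_def by simp_all
  have Se: "Se = K * N / (\<sigma> * \<beta> * t)" and Ie: "Ie = (\<mu> * N * \<sigma> * \<beta> * t - K * (p + \<mu> * N)) / (K * \<beta> * t)"
    unfolding Se_def Ie_def K_def t_def by simp_all
  have incidence: "\<beta> / N * Se * (1 - \<rho>) = K / \<sigma>"
    using pos \<open>t > 0\<close> unfolding Se t_def[symmetric] by (simp add: field_simps)
  have "K / \<sigma> * Ie + (p / N + \<mu>) * Se = \<mu> * N"
    using pos \<open>K > 0\<close> \<open>t > 0\<close> unfolding Se Ie by (simp add: field_simps)
  then have "\<mu> * N - \<beta> / N * Se * (1 - \<rho>) * Ie - p / N * Se - \<mu> * Se = 0"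
    using incidence by (simp add: algebra_simps)
  moreover have "\<beta> / N * Se * (1 - \<rho>) * Ie - (\<sigma> + \<mu>) * ((\<gamma> + \<mu>) / \<sigma> * Ie) = 0"
    using incidence unfolding K_def by simp
  ultimately show ?thesis
    using pos unfolding seirv_field_def zero_prod_def by simp
qed

theorem mainTheorem6:
  fixes N \<mu> \<beta> \<sigma> \<gamma> p \<rho> :: real
  assumes "N > 0" "\<mu> > 0" "\<beta> > 0" "\<sigma> > 0" "\<gamma> > 0" "p > 0"
      and "0 < \<rho>" "\<rho> < 1"
      and "R0_seirv N \<mu> \<beta> \<sigma> \<gamma> p \<rho> > 1"
  shows "let Se = (\<sigma> + \<mu>) * (\<gamma> + \<mu>) * N / (\<sigma> * \<beta> * (1 - \<rho>));
             Ie = (\<mu> * N * \<sigma> * \<beta> * (1 - \<rho>) - (\<sigma> + \<mu>) * (\<gamma> + \<mu>) * (p + \<mu> * N))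
                  / ((\<sigma> + \<mu>) * (\<gamma> + \<mu>) * \<beta> * (1 - \<rho>));
             Ee = (\<gamma> + \<mu>) / \<sigma> * Ie;
             Re = \<gamma> / \<mu> * Ie;
             Ve = p / (\<mu> * N) * Se
         in asymptotically_stable (seirv_field N \<mu> \<beta> \<sigma> \<gamma> p \<rho>) (Se, Ee, Ie, Re, Ve)"
proof -
  define Se Ie where "Se = (\<sigma> + \<mu>) * (\<gamma> + \<mu>) * N / (\<sigma> * \<beta> * (1 - \<rho>))"
    and "Ie = (\<mu> * N * \<sigma> * \<beta> * (1 - \<rho>) - (\<sigma> + \<mu>) * (\<gamma> + \<mu>) * (p + \<mu> * N))
              / ((\<sigma> + \<mu>) * (\<gamma> + \<mu>) * \<beta> * (1 - \<rho>))"
  have "0 < (\<sigma> + \<mu>) * (\<gamma> + \<mu>) * (p + \<mu> * N)"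
    using assms by (simp add: add_pos_pos)
  then have "(\<sigma> + \<mu>) * (\<gamma> + \<mu>) * (p + \<mu> * N) < \<mu> * N * \<sigma> * \<beta> * (1 - \<rho>)"
    using assms(9) unfolding R0_seirv_def by (simp add: less_divide_eq)
  then have "Ie > 0" "Se > 0"
    using assms unfolding Ie_def Se_def by simp_all
  moreover have "seirv_field N \<mu> \<beta> \<sigma> \<gamma> p \<rho> (Se, (\<gamma> + \<mu>) / \<sigma> * Ie, Ie, \<gamma> / \<mu> * Ie, p / (\<mu> * N) * Se) = 0"
    unfolding Se_def Ie_def using assms by (intro seirv_endemic_equilibrium) auto
  ultimately show ?thesis
    unfolding Let_def Se_def[symmetric] Ie_def[symmetric] using assms
    by (intro seirv_positive_equilibrium_asymptotically_stable) auto
qed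

end
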